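(* The $k$-linear category $k[\Delta_{a,\mathrm{inj}}]$ is free as a left and as a right $u_a(\Omega_a)$-module, where $u_a(\Omega_a)$ denotes the image of the $k$-linear functor $u_a\colon\Omega_a\to k[\Delta_{a,\mathrm{inj}}]$.
   Context: Let $k$ be a field. For a small category $\mathcal C$, $k[\mathcal C]$ is its $k$-linearization: same objects, $k[\mathcal C](x,y)$ the $k$-vector space with basis $\mathrm{Hom}_{\mathcal C}(x,y)$, composition extended bilinearly. $\Delta_{a,\mathrm{inj}}$ is the category with objects $[n]=\{0<1<\dots<n\}$ for $n\ge0$ and $[-1]=\varnothing$, and injective order-preserving maps as morphisms; for $0\le i\le n$ (and $n\ge 0$), $\delta^i\colon[n-1]\to[n]$ is the injective order-preserving map omitting $i$ (so $\delta^0\colon[-1]\to[0]$ is the empty map). $\Omega_a$ is the $k$-linear category with objects $[n]$, $n\ge -1$, generated by arrows $d_n\colon[n-1]\to[n]$ for $n\ge 0$ subject only to the relations $d_{n+1}d_n=0$ for $n\ge0$. The $k$-linear functor $u_a\colon\Omega_a\to k[\Delta_{a,\mathrm{inj}}]$ is the identity on objects and sends $d_n\mapsto\sum_{i=0}^n(-1)^i\delta^i$. *)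

theory Defs
  imports Main
begin

text \<open>Objects [n], n \<ge> -1, are encoded by their cardinality c = n+1 :: nat.
A morphism of Delta_{a,inj} is a triple (c, d, f) with source c, target d and
f an injective order-preserving map {0..<c} -> {0..<d} (extended by 0 outside).\<close>

type_synonym mor = "nat \<times> nat \<times> (nat \<Rightarrow> nat)"

definition src :: "mor \<Rightarrow> nat" where "src m = fst m"
definition tgt :: "mor \<Rightarrow> nat" where "tgt m = fst (snd m)"
definition fn :: "mor \<Rightarrow> (nat \<Rightarrow> nat)" where "fn m = snd (snd m)"

definition valid_mor :: "mor \<Rightarrow> bool" where
  "valid_mor m \<longleftrightarrow> strict_mono_on {..<src m} (fn m) \<and> fn m ` {..<src m} \<subseteq> {..<tgt m}
     \<and> (\<forall>i\<ge>src m. fn m i = 0)"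

text \<open>composition g \<circ> f (only meaningful when tgt f = src g)\<close>
definition mcomp :: "mor \<Rightarrow> mor \<Rightarrow> mor" where
  "mcomp g f = (src f, tgt g, \<lambda>i. if i < src f then fn g (fn f i) else 0)"

definition idm :: "nat \<Rightarrow> mor" where
  "idm c = (c, c, \<lambda>i. if i < c then i else 0)"

text \<open>delta^i : [c-1] -> [c] in cardinality terms c -> c+1, omitting i (i \<le> c)\<close>
definition delta :: "nat \<Rightarrow> nat \<Rightarrow> mor" where
  "delta c i = (c, Suc c, \<lambda>j. if j < c then (if j < i then j else Suc j) else 0)"

text \<open>Elements of the k-linearization: finitely supported k-valued functions on
morphisms; this is the direct sum of all hom spaces of k[Delta_{a,inj}].\<close>
definition kDelta :: "(mor \<Rightarrow> 'k::field) set" where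
  "kDelta = {\<phi>. finite {m. \<phi> m \<noteq> 0} \<and> (\<forall>m. \<phi> m \<noteq> 0 \<longrightarrow> valid_mor m)}"

definition basis_el :: "mor \<Rightarrow> (mor \<Rightarrow> 'k::field)" where
  "basis_el f = (\<lambda>g. if g = f then 1 else 0)"

text \<open>bilinear extension of composition (zero on non-composable pairs)\<close>
definition conv :: "(mor \<Rightarrow> 'k::field) \<Rightarrow> (mor \<Rightarrow> 'k) \<Rightarrow> (mor \<Rightarrow> 'k)" where
  "conv \<psi> \<phi> = (\<lambda>h. \<Sum>p\<in>{(g, f). \<psi> g \<noteq> 0 \<and> \<phi> f \<noteq> 0 \<and> tgt f = src g \<and> mcomp g f = h}.
                    \<psi> (fst p) * \<phi> (snd p))"

text \<open>u_a(d_n) for n = c \<ge> 0: sum_{i=0}^{c} (-1)^i delta^i : [c-1] -> [c]\<close>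
definition ua_d :: "nat \<Rightarrow> (mor \<Rightarrow> 'k::field)" where
  "ua_d c = (\<lambda>m. \<Sum>i\<le>c. (-1) ^ i * basis_el (delta c i) m)"

text \<open>image under u_a of the path d_{c+l} ... d_{c+1} : [c-1] -> [c+l-1]
  (the identity for l = 0)\<close>
fun ua_path :: "nat \<Rightarrow> nat \<Rightarrow> (mor \<Rightarrow> 'k::field)" where
  "ua_path c 0 = basis_el (idm c)"
| "ua_path c (Suc l) = conv (ua_d (c + l)) (ua_path c l)"

text \<open>The image u_a(Omega_a): the k-span of the images of all paths of generators
(Omega_a is spanned by such paths), as a subspace of kDelta.\<close>
definition ua_image :: "(mor \<Rightarrow> 'k::field) set" where
  "ua_image = {\<phi>. \<exists>S a. finite S \<and> \<phi> = (\<lambda>m. \<Sum>p\<in>S. a p * ua_path (fst p) (snd p) m)}"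

text \<open>M is free as a left B-module (B acting by post-composition): there is a set G
of generators, each g \<in> M living in target y g (i.e. g \<in> \<oplus>_x M(x, y g)), such that every
element of M is uniquely a finite sum  \<Sum> b_g \<circ> g  with b_g \<in> \<oplus>_z B(y g, z).\<close>
definition free_left_module :: "(mor \<Rightarrow> 'k::field) set \<Rightarrow> (mor \<Rightarrow> 'k) set \<Rightarrow> bool" where
  "free_left_module B M \<longleftrightarrow> (\<exists>G y.
     (\<forall>g\<in>G. g \<in> M \<and> (\<forall>m. g m \<noteq> 0 \<longrightarrow> tgt m = y g)) \<and>
     (\<forall>\<phi>\<in>M. \<exists>!b. (\<forall>g. b g \<noteq> (\<lambda>_. 0) \<longrightarrow> g \<in> G) \<and> finite {g. b g \<noteq> (\<lambda>_. 0)} \<and>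
        (\<forall>g\<in>G. b g \<in> B \<and> (\<forall>m. b g m \<noteq> 0 \<longrightarrow> src m = y g)) \<and>
        \<phi> = (\<lambda>m. \<Sum>g\<in>{g. b g \<noteq> (\<lambda>_. 0)}. conv (b g) g m)))"

text \<open>right version: B acting by pre-composition\<close>
definition free_right_module :: "(mor \<Rightarrow> 'k::field) set \<Rightarrow> (mor \<Rightarrow> 'k) set \<Rightarrow> bool" where
  "free_right_module B M \<longleftrightarrow> (\<exists>G y.
     (\<forall>g\<in>G. g \<in> M \<and> (\<forall>m. g m \<noteq> 0 \<longrightarrow> src m = y g)) \<and>
     (\<forall>\<phi>\<in>M. \<exists>!b. (\<forall>g. b g \<noteq> (\<lambda>_. 0) \<longrightarrow> g \<in> G) \<and> finite {g. b g \<noteq> (\<lambda>_. 0)} \<and>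
        (\<forall>g\<in>G. b g \<in> B \<and> (\<forall>m. b g m \<noteq> 0 \<longrightarrow> tgt m = y g)) \<and>
        \<phi> = (\<lambda>m. \<Sum>g\<in>{g. b g \<noteq> (\<lambda>_. 0)}. conv g (b g) m)))"

end

theory Submission
  imports Defs
begin

text \<open>At every object the image of \<open>u\<^sub>a\<close> is spanned by the identity and by the alternating
  sum \<open>d\<close> of the coface maps (longer paths vanish because \<open>d \<circ> d = 0\<close>). Freeness therefore
  amounts to a basis of \<open>k[\<Delta>\<^sub>a\<^sub>,\<^sub>i\<^sub>n\<^sub>j]\<close> of the form \<open>{f, d \<circ> f}\<close> (left) or \<open>{f, f \<circ> d}\<close>
  (right), \<open>f\<close> running over a set of generators, and such a basis arises from the basis of
  morphisms by a unitriangular change of basis.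

  Left: let the leading gap \<open>a(f)\<close> be the number of points of the target below the image
  of \<open>f\<close>. For \<open>i \<le> a(f)\<close> one has \<open>\<delta>\<^sup>i \<circ> f = \<delta>\<^sup>0 \<circ> f\<close>, while for \<open>i > a(f)\<close> the map \<open>\<delta>\<^sup>i \<circ> f\<close>
  has the same leading gap as \<open>f\<close>. So if \<open>a(f)\<close> is even, \<open>d \<circ> f\<close> is \<open>\<delta>\<^sup>0 \<circ> f\<close> plus maps of
  even leading gap, and \<open>f \<mapsto> \<delta>\<^sup>0 \<circ> f\<close> maps the maps of even leading gap bijectively onto
  those of odd leading gap.

  Right: if \<open>f\<close> hits \<open>0\<close>, then \<open>f \<circ> \<delta>\<^sup>0\<close> drops the first point and no longer hits \<open>0\<close>,
  while \<open>f \<circ> \<delta>\<^sup>i\<close>, \<open>i > 0\<close>, still does; and dropping the first point maps the maps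
  hitting \<open>0\<close> bijectively onto the maps not hitting \<open>0\<close> other than the identity of \<open>[-1]\<close>.\<close>

lemma src_triple [simp]: "src (c, d, g) = c"
  and tgt_triple [simp]: "tgt (c, d, g) = d"
  and fn_triple [simp]: "fn (c, d, g) = g"
  by (simp_all add: src_def tgt_def fn_def)

lemma valid_mor_triple_iff:
  "valid_mor (c, d, g) \<longleftrightarrow>
     (\<forall>r s. r < s \<and> s < c \<longrightarrow> g r < g s) \<and> (\<forall>i<c. g i < d) \<and> (\<forall>i\<ge>c. g i = 0)"
  unfolding valid_mor_def strict_mono_on_def by auto

lemma valid_mor_mono:
  assumes "valid_mor (c, d, g)" "i \<le> j" "j < c"
  shows "g i \<le> g j"
  using assms unfolding valid_mor_triple_iff by (metis le_eq_less_or_eq)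

lemma src_delta [simp]: "src (delta c i) = c"
  and tgt_delta [simp]: "tgt (delta c i) = Suc c"
  and src_idm [simp]: "src (idm c) = c"
  and tgt_idm [simp]: "tgt (idm c) = c"
  by (simp_all add: delta_def idm_def)

lemma delta_neq_idm [simp]: "delta c i \<noteq> idm c'"
  by (metis n_not_Suc_n src_delta src_idm tgt_delta tgt_idm)

lemma delta_eq_iff:
  assumes "i \<le> c" "j \<le> c"
  shows "delta c i = delta c j \<longleftrightarrow> i = j"
proof
  assume eq: "delta c i = delta c j"
  show "i = j"
  proof (rule ccontr)
    assume "i \<noteq> j"
    then have "min i j < c" "fn (delta c i) (min i j) \<noteq> fn (delta c j) (min i j)"
      using assms by (auto simp: delta_def min_def)
    with eq show False by simp
  qed
qed simp

lemma mcomp_idm_left: "valid_mor f \<Longrightarrow> mcomp (idm (tgt f)) f = f"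
  by (cases f) (auto simp: mcomp_def idm_def valid_mor_triple_iff fun_eq_iff)

lemma mcomp_idm_right: "valid_mor f \<Longrightarrow> mcomp f (idm (src f)) = f"
  by (cases f) (auto simp: mcomp_def idm_def valid_mor_triple_iff fun_eq_iff)

lemma mcomp_delta_delta:
  assumes "j < i" "i \<le> Suc c"
  shows "mcomp (delta (Suc c) i) (delta c j) = mcomp (delta (Suc c) j) (delta c (i - 1))"
  using assms by (auto simp: mcomp_def delta_def fun_eq_iff)

lemma valid_mcomp:
  assumes "valid_mor g" "valid_mor f" "tgt f = src g"
  shows "valid_mor (mcomp g f)"
  using assms unfolding valid_mor_def strict_mono_on_def
  by (auto simp: mcomp_def image_subset_iff)

lemma valid_delta: "i \<le> c \<Longrightarrow> valid_mor (delta c i)"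
  by (auto simp: delta_def valid_mor_triple_iff)

lemma conv_as_sum:
  assumes "finite A" "finite C" "{g. \<psi> g \<noteq> 0} \<subseteq> A" "{f. \<phi> f \<noteq> 0} \<subseteq> C"
  shows "conv \<psi> \<phi> h = (\<Sum>(g, f)\<in>A \<times> C.
           if tgt f = src g \<and> mcomp g f = h then \<psi> g * \<phi> f else 0)"
  unfolding conv_def using assms
  by (intro sum.mono_neutral_cong_left) (auto split: prod.splits)

lemma finite_support_conv:
  assumes "finite {m. \<psi> m \<noteq> 0}" "finite {m. \<phi> m \<noteq> 0}"
  shows "finite {h. conv \<psi> \<phi> h \<noteq> (0::'k::field)}"
proof (rule finite_subset)
  show "{h. conv \<psi> \<phi> h \<noteq> 0} \<subseteq> (\<lambda>(g, f). mcomp g f) ` ({m. \<psi> m \<noteq> 0} \<times> {m. \<phi> m \<noteq> 0})"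
  proof
    fix h assume "h \<in> {h. conv \<psi> \<phi> h \<noteq> 0}"
    then have "conv \<psi> \<phi> h \<noteq> 0" by simp
    then obtain p where "p \<in> {(g, f). \<psi> g \<noteq> 0 \<and> \<phi> f \<noteq> 0 \<and> tgt f = src g \<and> mcomp g f = h}"
      unfolding conv_def by (rule sum.not_neutral_contains_not_neutral)
    then show "h \<in> (\<lambda>(g, f). mcomp g f) ` ({m. \<psi> m \<noteq> 0} \<times> {m. \<phi> m \<noteq> 0})"
      by force
  qed
qed (use assms in simp)

lemma finite_support_sum:
  assumes "finite I" "\<And>i. i \<in> I \<Longrightarrow> finite {m. \<psi> i m \<noteq> 0}"
  shows "finite {m. (\<Sum>i\<in>I. \<psi> i m) \<noteq> (0::'k::comm_monoid_add)}"
proof (rule finite_subset)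
  show "{m. (\<Sum>i\<in>I. \<psi> i m) \<noteq> 0} \<subseteq> (\<Union>i\<in>I. {m. \<psi> i m \<noteq> 0})"
    by (auto intro: sum.not_neutral_contains_not_neutral)
qed (use assms in simp)

lemma finite_support_diff:
  "finite {m. \<psi> m \<noteq> 0} \<Longrightarrow> finite {m. \<phi> m \<noteq> 0} \<Longrightarrow> finite {m. \<psi> m - \<phi> m \<noteq> (0::'k::ab_group_add)}"
  by (rule finite_subset[of _ "{m. \<psi> m \<noteq> 0} \<union> {m. \<phi> m \<noteq> 0}"]) auto

lemma finite_support_scale:
  "finite {m. \<psi> m \<noteq> 0} \<Longrightarrow> finite {m. a * \<psi> m \<noteq> (0::'k::field)}"
  by (rule finite_subset[rotated]) auto

lemma basis_el_self [simp]: "basis_el f f = 1"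
  by (simp add: basis_el_def)

lemma basis_el_nonzero_iff: "basis_el f m \<noteq> (0::'k::field) \<longleftrightarrow> m = f"
  by (simp add: basis_el_def)

lemma finite_support_basis_el [simp]: "finite {m. (basis_el f :: mor \<Rightarrow> 'k::field) m \<noteq> 0}"
  by (simp add: basis_el_def)

lemma inj_basis_el: "inj (basis_el :: mor \<Rightarrow> mor \<Rightarrow> 'k::field)"
  by (rule injI) (metis basis_el_def basis_el_self zero_neq_one)

lemma basis_el_expansion:
  assumes "finite F" "{m. \<psi> m \<noteq> 0} \<subseteq> F"
  shows "\<psi> = (\<lambda>m. \<Sum>f\<in>F. \<psi> f * basis_el f m :: 'k::field)"
proof
  fix m
  have "(\<Sum>f\<in>F. \<psi> f * basis_el f m) = (\<Sum>f\<in>F. if f = m then \<psi> m else 0)"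
    by (intro sum.cong) (auto simp: basis_el_def)
  then show "\<psi> m = (\<Sum>f\<in>F. \<psi> f * basis_el f m)"
    using assms by auto
qed

lemma conv_zero_left [simp]: "conv (\<lambda>_. 0) \<phi> = (\<lambda>_. 0)"
  and conv_zero_right [simp]: "conv \<psi> (\<lambda>_. 0) = (\<lambda>_. 0)"
  by (simp_all add: conv_def)

lemma conv_scale_left: "conv (\<lambda>m. a * \<psi> m) \<phi> = (\<lambda>h. a * conv \<psi> \<phi> (h::mor) :: 'k::field)"
  by (cases "a = 0") (simp_all add: conv_def sum_distrib_left mult.assoc)

lemma conv_scale_right: "conv \<psi> (\<lambda>m. a * \<phi> m) = (\<lambda>h. a * conv \<psi> \<phi> (h::mor) :: 'k::field)"
  by (cases "a = 0") (simp_all add: conv_def sum_distrib_left mult.left_commute)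

lemma conv_add_left:
  fixes \<psi>1 \<psi>2 \<phi> :: "mor \<Rightarrow> 'k::field"
  assumes "finite {m. \<psi>1 m \<noteq> 0}" "finite {m. \<psi>2 m \<noteq> 0}" "finite {m. \<phi> m \<noteq> 0}"
  shows "conv (\<lambda>m. \<psi>1 m + \<psi>2 m) \<phi> = (\<lambda>h. conv \<psi>1 \<phi> h + conv \<psi>2 \<phi> h)"
proof
  fix h
  let ?A = "{m. \<psi>1 m \<noteq> 0} \<union> {m. \<psi>2 m \<noteq> 0}" and ?C = "{m. \<phi> m \<noteq> 0}"
  have expand: "conv \<psi> \<phi> h = (\<Sum>(g, f)\<in>?A \<times> ?C. if tgt f = src g \<and> mcomp g f = h then \<psi> g * \<phi> f else 0)"
    if "{g. \<psi> g \<noteq> 0} \<subseteq> ?A" for \<psi>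
    using assms that by (intro conv_as_sum) auto
  then show "conv (\<lambda>m. \<psi>1 m + \<psi>2 m) \<phi> h = conv \<psi>1 \<phi> h + conv \<psi>2 \<phi> h"
    by (subst (1 2 3) expand) (auto simp: sum.distrib[symmetric] distrib_right intro!: sum.cong)
qed

lemma conv_add_right:
  fixes \<psi> \<phi>1 \<phi>2 :: "mor \<Rightarrow> 'k::field"
  assumes "finite {m. \<psi> m \<noteq> 0}" "finite {m. \<phi>1 m \<noteq> 0}" "finite {m. \<phi>2 m \<noteq> 0}"
  shows "conv \<psi> (\<lambda>m. \<phi>1 m + \<phi>2 m) = (\<lambda>h. conv \<psi> \<phi>1 h + conv \<psi> \<phi>2 h)"
proof
  fix h
  let ?A = "{m. \<psi> m \<noteq> 0}" and ?C = "{m. \<phi>1 m \<noteq> 0} \<union> {m. \<phi>2 m \<noteq> 0}"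
  have expand: "conv \<psi> \<phi> h = (\<Sum>(g, f)\<in>?A \<times> ?C. if tgt f = src g \<and> mcomp g f = h then \<psi> g * \<phi> f else 0)"
    if "{f. \<phi> f \<noteq> 0} \<subseteq> ?C" for \<phi>
    using assms that by (intro conv_as_sum) auto
  then show "conv \<psi> (\<lambda>m. \<phi>1 m + \<phi>2 m) h = conv \<psi> \<phi>1 h + conv \<psi> \<phi>2 h"
    by (subst (1 2 3) expand) (auto simp: sum.distrib[symmetric] distrib_left intro!: sum.cong)
qed

lemma conv_lincomb_left:
  assumes "finite {m. \<psi>1 m \<noteq> 0}" "finite {m. \<psi>2 m \<noteq> 0}" "finite {m. \<phi> m \<noteq> 0}"
  shows "conv (\<lambda>m. a * \<psi>1 m + b * \<psi>2 m) \<phi> = (\<lambda>h. a * conv \<psi>1 \<phi> h + b * conv \<psi>2 \<phi> (h::mor) :: 'k::field)"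
  using assms by (simp add: conv_add_left finite_support_scale conv_scale_left)

lemma conv_lincomb_right:
  assumes "finite {m. \<psi> m \<noteq> 0}" "finite {m. \<phi>1 m \<noteq> 0}" "finite {m. \<phi>2 m \<noteq> 0}"
  shows "conv \<psi> (\<lambda>m. a * \<phi>1 m + b * \<phi>2 m) = (\<lambda>h. a * conv \<psi> \<phi>1 h + b * conv \<psi> \<phi>2 (h::mor) :: 'k::field)"
  using assms by (simp add: conv_add_right finite_support_scale conv_scale_right)

lemma conv_sum_left:
  fixes \<psi> :: "'i \<Rightarrow> mor \<Rightarrow> 'k::field"
  assumes "finite I" "\<And>i. i \<in> I \<Longrightarrow> finite {m. \<psi> i m \<noteq> 0}" "finite {m. \<phi> m \<noteq> 0}"
  shows "conv (\<lambda>m. \<Sum>i\<in>I. a i * \<psi> i m) \<phi> = (\<lambda>h. \<Sum>i\<in>I. a i * conv (\<psi> i) \<phi> h)"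
  using assms(1,2)
proof (induction I rule: finite_induct)
  case (insert j I)
  have "conv (\<lambda>m. a j * \<psi> j m + (\<Sum>i\<in>I. a i * \<psi> i m)) \<phi>
      = (\<lambda>h. conv (\<lambda>m. a j * \<psi> j m) \<phi> h + conv (\<lambda>m. \<Sum>i\<in>I. a i * \<psi> i m) \<phi> h)"
    using insert by (intro conv_add_left finite_support_scale finite_support_sum assms(3)) auto
  with insert show ?case by (simp add: conv_scale_left)
qed simp

lemma conv_sum_right:
  fixes \<phi> :: "'i \<Rightarrow> mor \<Rightarrow> 'k::field"
  assumes "finite I" "\<And>i. i \<in> I \<Longrightarrow> finite {m. \<phi> i m \<noteq> 0}" "finite {m. \<psi> m \<noteq> 0}"
  shows "conv \<psi> (\<lambda>m. \<Sum>i\<in>I. a i * \<phi> i m) = (\<lambda>h. \<Sum>i\<in>I. a i * conv \<psi> (\<phi> i) h)"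
  using assms(1,2)
proof (induction I rule: finite_induct)
  case (insert j I)
  have "conv \<psi> (\<lambda>m. a j * \<phi> j m + (\<Sum>i\<in>I. a i * \<phi> i m))
      = (\<lambda>h. conv \<psi> (\<lambda>m. a j * \<phi> j m) h + conv \<psi> (\<lambda>m. \<Sum>i\<in>I. a i * \<phi> i m) h)"
    using insert by (intro conv_add_right finite_support_scale finite_support_sum assms(3)) auto
  with insert show ?case by (simp add: conv_scale_right)
qed simp

lemma conv_basis_el:
  "conv (basis_el g) (basis_el f) = (\<lambda>h. if tgt f = src g \<and> mcomp g f = h then 1 else (0::'k::field))"
proof
  fix h
  have "conv (basis_el g) (basis_el f) h = (\<Sum>(g', f')\<in>{g} \<times> {f}.
      if tgt f' = src g' \<and> mcomp g' f' = h then basis_el g g' * basis_el f f' else (0::'k))"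
    by (rule conv_as_sum) (auto simp: basis_el_def)
  then show "conv (basis_el g) (basis_el f) h = (if tgt f = src g \<and> mcomp g f = h then 1 else (0::'k))"
    by simp
qed

lemma conv_idm_left: "valid_mor f \<Longrightarrow> conv (basis_el (idm (tgt f))) (basis_el f) = (basis_el f :: mor \<Rightarrow> 'k::field)"
  unfolding conv_basis_el by (auto simp: mcomp_idm_left basis_el_def fun_eq_iff)

lemma conv_idm_right: "valid_mor f \<Longrightarrow> conv (basis_el f) (basis_el (idm (src f))) = (basis_el f :: mor \<Rightarrow> 'k::field)"
  unfolding conv_basis_el by (auto simp: mcomp_idm_right basis_el_def fun_eq_iff)

section \<open>The generator \<open>d\<close> and the image of \<open>u\<^sub>a\<close>\<close>

lemma finite_support_ua_d [simp]: "finite {m. (ua_d c :: mor \<Rightarrow> 'k::field) m \<noteq> 0}"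
  unfolding ua_d_def by (intro finite_support_sum finite_support_scale) simp_all

lemma conv_ua_d_left:
  "finite {m. \<phi> m \<noteq> 0} \<Longrightarrow>
     conv (ua_d c) \<phi> = (\<lambda>h. \<Sum>i\<le>c. (-1) ^ i * conv (basis_el (delta c i)) \<phi> h :: 'k::field)"
  unfolding ua_d_def by (simp add: conv_sum_left)

lemma conv_ua_d_right:
  "finite {m. \<psi> m \<noteq> 0} \<Longrightarrow>
     conv \<psi> (ua_d c) = (\<lambda>h. \<Sum>i\<le>c. (-1) ^ i * conv \<psi> (basis_el (delta c i)) h :: 'k::field)"
  unfolding ua_d_def by (simp add: conv_sum_right)

lemma ua_d_support:
  assumes "(ua_d c :: mor \<Rightarrow> 'k::field) m \<noteq> 0"
  shows "src m = c" "tgt m = Suc c"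
proof -
  obtain i where "(-1::'k) ^ i * basis_el (delta c i) m \<noteq> 0"
    using assms unfolding ua_d_def by (blast intro: sum.not_neutral_contains_not_neutral)
  then have "m = delta c i" by (auto simp: basis_el_def split: if_splits)
  then show "src m = c" "tgt m = Suc c" by simp_all
qed

lemma ua_d_delta_0 [simp]: "(ua_d c :: mor \<Rightarrow> 'k::field) (delta c 0) = 1"
proof -
  have "(ua_d c :: mor \<Rightarrow> 'k) (delta c 0) = (\<Sum>i\<le>c. if i = 0 then 1 else 0)"
    unfolding ua_d_def by (intro sum.cong) (auto simp: basis_el_def delta_eq_iff)
  then show ?thesis by simp
qed

lemma ua_d_idm [simp]: "(ua_d c :: mor \<Rightarrow> 'k::field) (idm s) = 0"
  using ua_d_support(1,2)[of c "idm s"] by force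

lemma ua_path_Suc_0 [simp]: "(ua_path c (Suc 0) :: mor \<Rightarrow> 'k::field) = ua_d c"
proof -
  have "mcomp (delta c i) (idm c) = delta c i" for i
    by (auto simp: mcomp_def delta_def idm_def)
  then have "conv (ua_d c) (basis_el (idm c)) = (ua_d c :: mor \<Rightarrow> 'k)"
    by (simp add: conv_ua_d_left conv_basis_el) (simp add: ua_d_def basis_el_def eq_commute)
  then show ?thesis by simp
qed

text \<open>The simplicial identity pairs the term \<open>(i, j)\<close>, \<open>i \<le> j\<close>, of \<open>d \<circ> d\<close> with the
  term \<open>(j + 1, i)\<close> of opposite sign.\<close>

lemma conv_ua_d_ua_d: "conv (ua_d (Suc c)) (ua_d c) = (\<lambda>_. 0::'k::field)"
proof
  fix h
  let ?s = "\<lambda>(i, j). (-1::'k) ^ (i + j) * (if mcomp (delta (Suc c) i) (delta c j) = h then 1 else 0)"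
  let ?L = "{..Suc c} \<times> {..c} \<inter> {(i, j). i \<le> j}" and ?U = "{..Suc c} \<times> {..c} - {(i, j). i \<le> j}"
  have "conv (ua_d (Suc c)) (ua_d c) h = (\<Sum>i\<le>Suc c. \<Sum>j\<le>c. ?s (i, j))"
    by (subst conv_ua_d_left)
      (simp_all add: conv_ua_d_right conv_basis_el sum_distrib_left power_add mult.assoc
        del: sum.atMost_Suc)
  also have "\<dots> = sum ?s ({..Suc c} \<times> {..c})"
    by (rule sum.cartesian_product'[symmetric])
  also have "\<dots> = sum ?s ?L + sum ?s ?U"
    by (rule sum.Int_Diff) simp
  also have "sum ?s ?U = sum (\<lambda>(i, j). ?s (Suc j, i)) ?L"
    by (rule sum.reindex_bij_witness[where i = "\<lambda>(i, j). (Suc j, i)" and j = "\<lambda>(i, j). (j, i - 1)"])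
      (auto simp: not_le dest!: less_imp_Suc_add)
  also have "\<dots> = sum (\<lambda>p. - ?s p) ?L"
    by (intro sum.cong) (auto simp: mcomp_delta_delta[of _ "Suc _"] add.commute)
  finally show "conv (ua_d (Suc c)) (ua_d c) h = (0::'k)"
    by (simp add: sum_negf)
qed

lemma ua_path_eq_0:
  assumes "2 \<le> l"
  shows "(ua_path c l :: mor \<Rightarrow> 'k::field) = (\<lambda>_. 0)"
proof -
  obtain n where l: "l = Suc (Suc n)" using assms by (metis add_2_eq_Suc le_Suc_ex)
  show ?thesis unfolding l
  proof (induction n)
    case 0
    show ?case
      using ua_path.simps(2)[of c "Suc 0"] by (simp del: ua_path.simps add: conv_ua_d_ua_d)
  qed simp
qed

definition ua_expand :: "(mor \<Rightarrow> 'k::field) \<Rightarrow> mor \<Rightarrow> 'k" where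
  "ua_expand \<beta> m =
     (if m = idm (src m) then 1 else 0) * \<beta> (idm (src m)) + \<beta> (delta (src m) 0) * ua_d (src m) m"

lemma ua_expand_ua_path: "ua_expand (ua_path c l :: mor \<Rightarrow> 'k::field) = ua_path c l"
proof
  fix m
  consider "l = 0" | "l = Suc 0" | "2 \<le> l" by linarith
  then show "ua_expand (ua_path c l :: mor \<Rightarrow> 'k) m = ua_path c l m"
  proof cases
    case 2
    have "(ua_d c :: mor \<Rightarrow> 'k) m' = 0" if "src m' \<noteq> c" for m'
      using that ua_d_support(1) by blast
    then have "(ua_d c :: mor \<Rightarrow> 'k) (delta (src m) 0) * ua_d (src m) m = ua_d c m"
      by (cases "src m = c") simp_all
    with 2 show ?thesis by (simp add: ua_expand_def del: ua_path.simps)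
  qed (auto simp: ua_expand_def basis_el_def ua_path_eq_0)
qed

lemma ua_expand_lincomb:
  "ua_expand (\<lambda>m. \<Sum>p\<in>S. a p * \<psi> p m) = (\<lambda>m. \<Sum>p\<in>S. a p * ua_expand (\<psi> p) m :: 'k::field)"
  by (simp add: ua_expand_def fun_eq_iff sum_distrib_left sum_distrib_right sum.distrib algebra_simps)

lemma ua_expand_eq:
  assumes "\<beta> \<in> ua_image"
  shows "ua_expand \<beta> = (\<beta> :: mor \<Rightarrow> 'k::field)"
proof -
  obtain S a where "\<beta> = (\<lambda>m. \<Sum>p\<in>S. a p * ua_path (fst p) (snd p) m)"
    using assms unfolding ua_image_def by blast
  then show ?thesis by (simp add: ua_expand_lincomb ua_expand_ua_path)
qed

lemma lincomb_ua_path_in_ua_image: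
  "finite S \<Longrightarrow> (\<lambda>m. \<Sum>p\<in>S. a p * ua_path (fst p) (snd p) m) \<in> (ua_image :: (mor \<Rightarrow> 'k::field) set)"
  unfolding ua_image_def by blast

lemma ua_image_src_eq:
  assumes "\<beta> \<in> ua_image" "\<And>m. \<beta> m \<noteq> 0 \<Longrightarrow> src m = y"
  shows "\<beta> = (\<lambda>m. \<beta> (idm y) * basis_el (idm y) m + \<beta> (delta y 0) * (ua_d y m :: 'k::field))"
proof
  fix m
  show "\<beta> m = \<beta> (idm y) * basis_el (idm y) m + \<beta> (delta y 0) * ua_d y m"
  proof (cases "src m = y")
    case False
    then have "\<beta> (idm (src m)) = 0" "\<beta> (delta (src m) 0) = 0" "(ua_d y m :: 'k) = 0"
      using assms(2)[of "idm (src m)"] assms(2)[of "delta (src m) 0"] ua_d_support(1)[of y m]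
      by auto
    then show ?thesis
      using fun_cong[OF ua_expand_eq[OF assms(1)], of m] False by (auto simp: ua_expand_def basis_el_def)
  qed (use fun_cong[OF ua_expand_eq[OF assms(1)], of m] in \<open>auto simp: ua_expand_def basis_el_def\<close>)
qed

lemma idm_ua_d_in_ua_image:
  "(\<lambda>m. a * basis_el (idm y) m + b * ua_d y m) \<in> (ua_image :: (mor \<Rightarrow> 'k::field) set)"
proof -
  let ?S = "{(y, 0), (y, Suc 0)}" and ?a = "\<lambda>p. if snd p = 0 then a else b"
  have "(\<lambda>m. \<Sum>p\<in>?S. ?a p * ua_path (fst p) (snd p) m) = (\<lambda>m. a * basis_el (idm y) m + b * ua_d y m :: 'k)"
    by (simp del: ua_path.simps add: ua_path.simps(1))
  then show ?thesis using lincomb_ua_path_in_ua_image[of ?S ?a] by simp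
qed

lemma src_of_idm_ua_d:
  "a * basis_el (idm y) m + b * (ua_d y m :: 'k::field) \<noteq> 0 \<Longrightarrow> src m = y"
  by (cases "ua_d y m = (0::'k)") (auto simp: basis_el_def split: if_splits dest: ua_d_support)

text \<open>No generator \<open>d\<close> of \<open>\<Omega>\<^sub>a\<close> ends in the empty object \<open>[-1]\<close>, of cardinality 0.\<close>

definition ua_d_into :: "nat \<Rightarrow> mor \<Rightarrow> 'k::field" where
  "ua_d_into y = (if y = 0 then (\<lambda>_. 0) else ua_d (y - 1))"

lemma finite_support_ua_d_into [simp]: "finite {m. (ua_d_into y :: mor \<Rightarrow> 'k::field) m \<noteq> 0}"
  by (simp add: ua_d_into_def)

lemma ua_image_tgt_eq:
  assumes "\<beta> \<in> ua_image" "\<And>m. \<beta> m \<noteq> 0 \<Longrightarrow> tgt m = y"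
  shows "\<beta> = (\<lambda>m. \<beta> (idm y) * basis_el (idm y) m + \<beta> (delta (y - 1) 0) * (ua_d_into y m :: 'k::field))"
proof
  fix m
  have expand: "\<beta> m = (if m = idm (src m) then 1 else 0) * \<beta> (idm (src m))
      + \<beta> (delta (src m) 0) * ua_d (src m) m"
    using fun_cong[OF ua_expand_eq[OF assms(1)], of m] by (simp add: ua_expand_def)
  have "(if m = idm (src m) then 1 else 0) * \<beta> (idm (src m)) = \<beta> (idm y) * basis_el (idm y) m"
    using assms(2)[of "idm (src m)"] by (cases "src m = y") (auto simp: basis_el_def, metis)
  moreover have "\<beta> (delta (src m) 0) * ua_d (src m) m = \<beta> (delta (y - 1) 0) * ua_d_into y m"
  proof (cases "Suc (src m) = y")
    case False
    have "(ua_d_into y m :: 'k) = 0"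
      using False ua_d_support(1)[of "y - 1" m] by (cases y) (auto simp: ua_d_into_def)
    moreover have "\<beta> (delta (src m) 0) = 0"
      using False assms(2)[of "delta (src m) 0"] by auto
    ultimately show ?thesis by simp
  qed (auto simp: ua_d_into_def)
  ultimately show "\<beta> m = \<beta> (idm y) * basis_el (idm y) m + \<beta> (delta (y - 1) 0) * ua_d_into y m"
    using expand by simp
qed

lemma idm_ua_d_into_in_ua_image:
  "(\<lambda>m. a * basis_el (idm y) m + b * ua_d_into y m) \<in> (ua_image :: (mor \<Rightarrow> 'k::field) set)"
proof (cases "y = 0")
  case True
  have "(\<lambda>m. \<Sum>p\<in>{(0, 0)}. a * ua_path (fst p) (snd p) m) = (\<lambda>m. a * basis_el (idm y) m + b * ua_d_into y m :: 'k)"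
    using True by (simp add: ua_d_into_def)
  then show ?thesis using lincomb_ua_path_in_ua_image[of "{(0, 0)}" "\<lambda>_. a"] by simp
next
  case False
  let ?S = "{(y, 0), (y - 1, Suc 0)}" and ?a = "\<lambda>p. if snd p = 0 then a else b"
  have "(\<lambda>m. \<Sum>p\<in>?S. ?a p * ua_path (fst p) (snd p) m) = (\<lambda>m. a * basis_el (idm y) m + b * ua_d_into y m :: 'k)"
    using False by (simp del: ua_path.simps add: ua_path.simps(1) ua_d_into_def)
  then show ?thesis using lincomb_ua_path_in_ua_image[of ?S ?a] by simp
qed

lemma tgt_of_idm_ua_d_into:
  "a * basis_el (idm y) m + b * (ua_d_into y m :: 'k::field) \<noteq> 0 \<Longrightarrow> tgt m = y"
  by (cases "ua_d_into y m = (0::'k)")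
    (auto simp: basis_el_def ua_d_into_def split: if_splits dest: ua_d_support)

section \<open>Freeness from a triangular basis\<close>

text \<open>Modulo the span of the \<open>basis_el f\<close>, \<open>f \<in> P\<close>, each \<open>D f\<close>, \<open>f \<in> E\<close>, is the basis vector
  \<open>basis_el (sh f)\<close>, and these exhaust the valid morphisms outside \<open>P\<close>; so together the
  \<open>basis_el f\<close> and the \<open>D f\<close> form a basis of \<open>kDelta\<close>.\<close>

locale triangular_system =
  fixes P E :: "mor set" and sh :: "mor \<Rightarrow> mor" and D :: "mor \<Rightarrow> mor \<Rightarrow> 'k::field"
  assumes E_subset_P: "E \<subseteq> P"
    and inj_on_sh: "inj_on sh E"
    and sh_image: "sh ` E = {m. valid_mor m} - P"
    and D_outside_P: "f \<in> E \<Longrightarrow> q \<notin> P \<Longrightarrow> D f q = (if q = sh f then 1 else 0)"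
    and finite_support_D: "f \<in> E \<Longrightarrow> finite {q. D f q \<noteq> 0}"
    and D_zero: "f \<in> P - E \<Longrightarrow> D f = (\<lambda>_. 0)"
begin

lemma finite_sh_preimage: "\<phi> \<in> kDelta \<Longrightarrow> finite (sh -` {m. \<phi> m \<noteq> 0} \<inter> E)"
  by (intro finite_vimage_IntI inj_on_sh) (simp add: kDelta_def)

lemma sum_D_outside_P:
  assumes "\<phi> \<in> kDelta" "q \<notin> P"
  shows "(\<Sum>f\<in>sh -` {m. \<phi> m \<noteq> 0} \<inter> E. \<phi> (sh f) * D f q) = \<phi> q"
proof -
  let ?FE = "sh -` {m. \<phi> m \<noteq> 0} \<inter> E"
  have "(\<Sum>f\<in>?FE. \<phi> (sh f) * D f q) = (\<Sum>f\<in>?FE \<inter> {f. sh f = q}. \<phi> q)"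
    using assms finite_sh_preimage by (intro sum.mono_neutral_cong_right) (auto simp: D_outside_P)
  also have "\<dots> = \<phi> q"
  proof (cases "\<phi> q = 0")
    case False
    then have "valid_mor q" using assms(1) unfolding kDelta_def by blast
    then obtain f where f: "f \<in> E" "q = sh f" using assms(2) sh_image by blast
    then have "?FE \<inter> {f. sh f = q} = {f}"
      using False by (auto dest: inj_onD[OF inj_on_sh])
    then show ?thesis by simp
  qed simp
  finally show ?thesis .
qed

lemma kDelta_lincomb:
  assumes "\<phi> \<in> kDelta"
  obtains F a \<mu> where "finite F" "F \<subseteq> P" "\<phi> = (\<lambda>m. \<Sum>f\<in>F. a f * basis_el f m + \<mu> f * D f m)"
proof -
  define FE where "FE = sh -` {m. \<phi> m \<noteq> 0} \<inter> E"
  define \<psi> where "\<psi> m = \<phi> m - (\<Sum>f\<in>FE. \<phi> (sh f) * D f m)" for m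
  define \<mu> where "\<mu> f = (if f \<in> FE then \<phi> (sh f) else 0)" for f
  have fin_\<phi>: "finite {m. \<phi> m \<noteq> 0}" using assms by (simp add: kDelta_def)
  have fin_FE: "finite FE"
    unfolding FE_def using assms by (rule finite_sh_preimage)
  have "finite {m. \<phi> m - (\<Sum>f\<in>FE. \<phi> (sh f) * D f m) \<noteq> 0}"
    using fin_\<phi> fin_FE finite_support_D
    by (intro finite_support_diff finite_support_sum finite_support_scale) (auto simp: FE_def)
  then have fin_\<psi>: "finite {m. \<psi> m \<noteq> 0}" by (simp add: \<psi>_def)
  have \<psi>_P: "{m. \<psi> m \<noteq> 0} \<subseteq> P"
    using sum_D_outside_P[OF assms] unfolding \<psi>_def FE_def by force
  let ?F = "{m. \<psi> m \<noteq> 0} \<union> FE"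
  have "(\<lambda>m. \<Sum>f\<in>?F. \<psi> f * basis_el f m + \<mu> f * D f m) = (\<lambda>m. \<psi> m + (\<Sum>f\<in>FE. \<phi> (sh f) * D f m))"
  proof -
    have "(\<Sum>f\<in>?F. \<mu> f * D f m) = (\<Sum>f\<in>FE. \<phi> (sh f) * D f m)" for m
      using fin_\<psi> fin_FE by (subst sum.mono_neutral_right[of ?F FE]) (auto simp: \<mu>_def)
    then show ?thesis
      using basis_el_expansion[of ?F \<psi>] fin_\<psi> fin_FE by (auto simp: sum.distrib fun_eq_iff)
  qed
  then have "\<phi> = (\<lambda>m. \<Sum>f\<in>?F. \<psi> f * basis_el f m + \<mu> f * D f m)"
    by (simp add: \<psi>_def)
  moreover have "?F \<subseteq> P" using \<psi>_P E_subset_P by (auto simp: FE_def)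
  ultimately show ?thesis using that fin_\<psi> fin_FE by blast
qed

lemma D_at_sh:
  assumes "f \<in> P" "f' \<in> E"
  shows "D f (sh f') = (if f = f' then 1 else 0)"
proof (cases "f \<in> E")
  case True
  have "sh f' \<notin> P" using assms(2) sh_image by auto
  then have "D f (sh f') = (if sh f' = sh f then 1 else 0)" using True D_outside_P by simp
  then show ?thesis using True assms(2) inj_on_sh by (auto simp: inj_on_eq_iff)
qed (use assms D_zero in auto)

lemma lincomb_eq_0:
  assumes "finite F" "F \<subseteq> P" and zero: "\<And>m. (\<Sum>f\<in>F. a f * basis_el f m + \<mu> f * D f m) = 0"
  shows lincomb_eq_0_D: "f \<in> F \<inter> E \<Longrightarrow> \<mu> f = 0"
    and lincomb_eq_0_basis_el: "f \<in> F \<Longrightarrow> a f = 0"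
proof -
  show \<mu>: "\<mu> f' = 0" if "f' \<in> F \<inter> E" for f'
  proof -
    have "sh f' \<notin> P" using that sh_image by auto
    then have "(\<Sum>f\<in>F. a f * basis_el f (sh f') + \<mu> f * D f (sh f')) = (\<Sum>f\<in>F. if f = f' then \<mu> f' else 0)"
      using that assms(2) by (intro sum.cong) (auto simp: basis_el_def D_at_sh)
    then show ?thesis using zero[of "sh f'"] assms(1) that by simp
  qed
  show "a f' = 0" if "f' \<in> F" for f'
  proof -
    have "\<mu> f * D f f' = 0" if "f \<in> F" for f
      using \<mu>[of f] D_zero[of f] that assms(2) by (cases "f \<in> E") auto
    then have "(\<Sum>f\<in>F. a f * basis_el f f' + \<mu> f * D f f') = (\<Sum>f\<in>F. if f = f' then a f' else 0)"
      by (intro sum.cong) (auto simp: basis_el_def)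
    then show ?thesis using zero[of f'] assms(1) that by simp
  qed
qed

end

text \<open>\<open>act \<beta> g\<close> is the action of a coefficient \<open>\<beta>\<close> on \<open>g\<close> (post- or pre-composition);
  coefficients acting on \<open>basis_el f\<close> live at the object \<open>slot f\<close>, where \<open>B\<close> is spanned by
  \<open>idm\<close> and \<open>X\<close>, the coefficient of \<open>X\<close> being read off at \<open>pivot\<close>.\<close>

locale free_by_triangularity =
  triangular_system P E sh "\<lambda>f. act (X (slot f)) (basis_el f)"
  for P E :: "mor set" and sh :: "mor \<Rightarrow> mor"
    and act :: "(mor \<Rightarrow> 'k::field) \<Rightarrow> (mor \<Rightarrow> 'k) \<Rightarrow> mor \<Rightarrow> 'k"
    and X :: "nat \<Rightarrow> mor \<Rightarrow> 'k" and slot :: "mor \<Rightarrow> nat" +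
  fixes B :: "(mor \<Rightarrow> 'k) set" and coeff_slot :: "mor \<Rightarrow> nat" and pivot :: "nat \<Rightarrow> mor"
  assumes P_valid: "P \<subseteq> {m. valid_mor m}"
    and X_zero: "f \<in> P - E \<Longrightarrow> X (slot f) = (\<lambda>_. 0)"
    and act_basis_el: "f \<in> P \<Longrightarrow>
      act (\<lambda>m. a * basis_el (idm (slot f)) m + b * X (slot f) m) (basis_el f)
        = (\<lambda>m. a * basis_el f m + b * act (X (slot f)) (basis_el f) m)"
    and B_eq: "\<beta> \<in> B \<Longrightarrow> (\<And>m. \<beta> m \<noteq> 0 \<Longrightarrow> coeff_slot m = y) \<Longrightarrow>
      \<beta> = (\<lambda>m. \<beta> (idm y) * basis_el (idm y) m + \<beta> (pivot y) * X y m)"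
    and B_mem: "(\<lambda>m. a * basis_el (idm y) m + b * X y m) \<in> B"
    and B_slot: "a * basis_el (idm y) m + b * X y m \<noteq> 0 \<Longrightarrow> coeff_slot m = y"
begin

definition gen_slot :: "(mor \<Rightarrow> 'k) \<Rightarrow> nat" where
  "gen_slot g = slot (inv basis_el g)"

definition coeff_family :: "((mor \<Rightarrow> 'k) \<Rightarrow> mor \<Rightarrow> 'k) \<Rightarrow> bool" where
  "coeff_family b \<longleftrightarrow> (\<forall>g. b g \<noteq> (\<lambda>_. 0) \<longrightarrow> g \<in> basis_el ` P) \<and> finite {g. b g \<noteq> (\<lambda>_. 0)} \<and>
     (\<forall>g\<in>basis_el ` P. b g \<in> B \<and> (\<forall>m. b g m \<noteq> 0 \<longrightarrow> coeff_slot m = gen_slot g))"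

definition combine :: "((mor \<Rightarrow> 'k) \<Rightarrow> mor \<Rightarrow> 'k) \<Rightarrow> mor \<Rightarrow> 'k" where
  "combine b = (\<lambda>m. \<Sum>g\<in>{g. b g \<noteq> (\<lambda>_. 0)}. act (b g) g m)"

lemma gen_slot_basis_el [simp]: "gen_slot (basis_el f) = slot f"
  by (simp add: gen_slot_def inj_basis_el)

lemma zero_in_B: "(\<lambda>_. 0) \<in> B"
  using B_mem[of 0 _ 0] by simp

lemma act_zero: "f \<in> P \<Longrightarrow> act (\<lambda>_. 0) (basis_el f) = (\<lambda>_. 0)"
  using act_basis_el[of f 0 0] by simp

lemma coeff_family_basis_el:
  assumes "coeff_family b" "f \<in> P"
  shows "b (basis_el f) \<in> B" "\<And>m. b (basis_el f) m \<noteq> 0 \<Longrightarrow> coeff_slot m = slot f"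
  using assms by (auto simp: coeff_family_def)

lemma coeff_family_basis_el_eq:
  assumes "coeff_family b" "f \<in> P"
  shows "b (basis_el f) = (\<lambda>m. b (basis_el f) (idm (slot f)) * basis_el (idm (slot f)) m
    + b (basis_el f) (pivot (slot f)) * X (slot f) m)"
  by (rule B_eq[OF coeff_family_basis_el[OF assms]])

lemma act_coeff_family:
  assumes "coeff_family b" "f \<in> P"
  shows "act (b (basis_el f)) (basis_el f) = (\<lambda>m. b (basis_el f) (idm (slot f)) * basis_el f m
     + b (basis_el f) (pivot (slot f)) * act (X (slot f)) (basis_el f) m)"
  using arg_cong[OF coeff_family_basis_el_eq[OF assms], of "\<lambda>\<beta>. act \<beta> (basis_el f)"]
  unfolding act_basis_el[OF assms(2)] .

lemma finite_coeff_family_support: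
  "coeff_family b \<Longrightarrow> finite {f. b (basis_el f) \<noteq> (\<lambda>_. 0)}"
  unfolding coeff_family_def
  using finite_vimageI[OF _ inj_basis_el, of "{g. b g \<noteq> (\<lambda>_. 0)}"] by (simp add: vimage_def)

lemma combine_eq_sum:
  assumes "coeff_family b" "finite F" "F \<subseteq> P" "{g. b g \<noteq> (\<lambda>_. 0)} \<subseteq> basis_el ` F"
  shows "combine b = (\<lambda>m. \<Sum>f\<in>F. act (b (basis_el f)) (basis_el f) m)"
proof
  fix m
  have "combine b m = (\<Sum>g\<in>basis_el ` F. act (b g) g m)"
    unfolding combine_def
  proof (rule sum.mono_neutral_left)
    show "\<forall>g\<in>basis_el ` F - {g. b g \<noteq> (\<lambda>_. 0)}. act (b g) g m = 0"
      using assms(3) act_zero by auto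
  qed (use assms in auto)
  also have "\<dots> = (\<Sum>f\<in>F. act (b (basis_el f)) (basis_el f) m)"
    by (rule sum.reindex[OF inj_on_subset[OF inj_basis_el], unfolded comp_def]) simp
  finally show "combine b m = (\<Sum>f\<in>F. act (b (basis_el f)) (basis_el f) m)" .
qed

lemma combine_eq_lincomb:
  assumes "coeff_family b" "finite F" "F \<subseteq> P" "{g. b g \<noteq> (\<lambda>_. 0)} \<subseteq> basis_el ` F"
  shows "combine b = (\<lambda>m. \<Sum>f\<in>F. b (basis_el f) (idm (slot f)) * basis_el f m
    + b (basis_el f) (pivot (slot f)) * act (X (slot f)) (basis_el f) m)"
  unfolding combine_eq_sum[OF assms] using assms(1,3)
  by (intro ext sum.cong) (auto simp: act_coeff_family)

lemma coeff_family_exists: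
  assumes "\<phi> \<in> kDelta"
  obtains b where "coeff_family b" "\<phi> = combine b"
proof -
  obtain F a \<mu> where F: "finite F" "F \<subseteq> P"
    and \<phi>: "\<phi> = (\<lambda>m. \<Sum>f\<in>F. a f * basis_el f m + \<mu> f * act (X (slot f)) (basis_el f) m)"
    using kDelta_lincomb[OF assms] .
  define b where "b g = (if g \<in> basis_el ` F then (\<lambda>m. a (inv basis_el g) * basis_el (idm (gen_slot g)) m
    + \<mu> (inv basis_el g) * X (gen_slot g) m) else (\<lambda>_. 0))" for g
  have b_basis_el: "b (basis_el f) = (\<lambda>m. a f * basis_el (idm (slot f)) m + \<mu> f * X (slot f) m)"
    if "f \<in> F" for f
    using that by (simp add: b_def inj_basis_el)
  have supp: "{g. b g \<noteq> (\<lambda>_. 0)} \<subseteq> basis_el ` F"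
    by (auto simp: b_def)
  have "coeff_family b"
    unfolding coeff_family_def using supp F B_mem B_slot zero_in_B
    by (auto simp: b_def intro: finite_subset)
  moreover have "combine b = \<phi>"
    unfolding combine_eq_sum[OF \<open>coeff_family b\<close> F supp] \<phi> using F
    by (intro ext sum.cong) (auto simp: b_basis_el act_basis_el)
  ultimately show ?thesis using that by simp
qed

lemma coeff_family_unique:
  assumes b1: "coeff_family b1" and b2: "coeff_family b2" and eq: "combine b1 = combine b2"
  shows "b1 = b2"
proof -
  define F where "F = {f \<in> P. b1 (basis_el f) \<noteq> (\<lambda>_. 0) \<or> b2 (basis_el f) \<noteq> (\<lambda>_. 0)}"
  have "F \<subseteq> {f. b1 (basis_el f) \<noteq> (\<lambda>_. 0)} \<union> {f. b2 (basis_el f) \<noteq> (\<lambda>_. 0)}"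
    by (auto simp: F_def)
  then have F: "finite F" "F \<subseteq> P"
    using finite_coeff_family_support[OF b1] finite_coeff_family_support[OF b2]
    by (auto simp: F_def dest: finite_subset)
  have supp: "{g. b g \<noteq> (\<lambda>_. 0)} \<subseteq> basis_el ` F" if "b \<in> {b1, b2}" for b
    using that b1 b2 by (auto simp: F_def coeff_family_def)
  let ?a = "\<lambda>b f. b (basis_el f) (idm (slot f))" and ?\<mu> = "\<lambda>b f. b (basis_el f) (pivot (slot f))"
  have "(\<Sum>f\<in>F. (?a b1 f - ?a b2 f) * basis_el f m
      + (?\<mu> b1 f - ?\<mu> b2 f) * act (X (slot f)) (basis_el f) m) = 0" for m
    using fun_cong[OF eq, of m] combine_eq_lincomb[OF b1 F supp] combine_eq_lincomb[OF b2 F supp]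
    by (simp add: algebra_simps sum_subtractf sum.distrib)
  note diff_eq_0 = lincomb_eq_0_basis_el[OF F this] lincomb_eq_0_D[OF F this]
  have on_F: "b1 (basis_el f) = b2 (basis_el f)" if f: "f \<in> F" for f
  proof -
    have "f \<in> P" using f F(2) by blast
    then show ?thesis
      using diff_eq_0[of f] f X_zero[of f]
      by (subst coeff_family_basis_el_eq[OF b1 \<open>f \<in> P\<close>], subst coeff_family_basis_el_eq[OF b2 \<open>f \<in> P\<close>])
        (cases "f \<in> E"; simp)
  qed
  have off_F: "b g = (\<lambda>_. 0)" if "b \<in> {b1, b2}" "g \<notin> basis_el ` F" for b g
    using supp[OF that(1)] that(2) by blast
  show ?thesis
  proof
    fix g
    show "b1 g = b2 g"
      using on_F off_F by (cases "g \<in> basis_el ` F") auto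
  qed
qed

theorem free_module:
  "\<exists>G y. (\<forall>g\<in>G. g \<in> kDelta \<and> (\<forall>m. g m \<noteq> 0 \<longrightarrow> slot m = y g)) \<and>
     (\<forall>\<phi>\<in>kDelta. \<exists>!b. (\<forall>g. b g \<noteq> (\<lambda>_. 0) \<longrightarrow> g \<in> G) \<and> finite {g. b g \<noteq> (\<lambda>_. 0)} \<and>
        (\<forall>g\<in>G. b g \<in> B \<and> (\<forall>m. b g m \<noteq> 0 \<longrightarrow> coeff_slot m = y g)) \<and>
        \<phi> = (\<lambda>m. \<Sum>g\<in>{g. b g \<noteq> (\<lambda>_. 0)}. act (b g) g m))"
proof -
  have gens: "\<forall>g\<in>basis_el ` P. g \<in> kDelta \<and> (\<forall>m. g m \<noteq> 0 \<longrightarrow> slot m = gen_slot g)"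
    using P_valid by (auto simp: kDelta_def basis_el_nonzero_iff)
  have "\<forall>\<phi>\<in>kDelta. \<exists>!b. coeff_family b \<and> \<phi> = combine b"
    using coeff_family_exists coeff_family_unique by metis
  with gens show ?thesis
    unfolding coeff_family_def combine_def conj_assoc
    by (intro exI[of _ "basis_el ` P"] exI[of _ gen_slot] conjI)
qed

end

section \<open>The left module structure\<close>

lemma sum_minus_one_power_atMost: "(\<Sum>i\<le>n. (-1::'a::ring_1) ^ i) = (if even n then 1 else 0)"
  by (induction n) auto

definition leading_gap :: "mor \<Rightarrow> nat" where
  "leading_gap f = (if src f = 0 then tgt f else fn f 0)"

definition even_gap :: "mor set" where
  "even_gap = {f. valid_mor f \<and> even (leading_gap f)}"

definition shift_up :: "mor \<Rightarrow> mor" where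
  "shift_up f = (src f, Suc (tgt f), \<lambda>i. if i < src f then Suc (fn f i) else 0)"

definition shift_down :: "mor \<Rightarrow> mor" where
  "shift_down f = (src f, tgt f - 1, \<lambda>i. if i < src f then fn f i - 1 else 0)"

lemma leading_gap_le_tgt: "valid_mor f \<Longrightarrow> leading_gap f \<le> tgt f"
  by (cases f) (auto simp: leading_gap_def valid_mor_triple_iff less_imp_le)

lemma le_leading_gap:
  assumes "valid_mor (c, d, g)" "i < c"
  shows "leading_gap (c, d, g) \<le> g i"
  using assms valid_mor_mono[OF assms(1), of 0 i] by (simp add: leading_gap_def)

lemma mcomp_delta_triple:
  assumes "valid_mor (c, d, g)"
  shows "mcomp (delta d i) (c, d, g) = (c, Suc d, \<lambda>j. if j < c then (if g j < i then g j else Suc (g j)) else 0)"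
  using assms by (auto simp: mcomp_def delta_def valid_mor_triple_iff fun_eq_iff)

lemma mcomp_delta_le_leading_gap:
  assumes "valid_mor f" "i \<le> leading_gap f"
  shows "mcomp (delta (tgt f) i) f = shift_up f"
proof (cases f)
  case (fields c d g)
  then have "\<not> g j < i" if "j < c" for j
    using assms le_leading_gap[of c d g j] that by simp
  then show ?thesis
    using assms(1) by (auto simp: fields mcomp_delta_triple shift_up_def fun_eq_iff)
qed

lemma mcomp_delta_gt_leading_gap:
  assumes "valid_mor f" "leading_gap f < i" "i \<le> tgt f"
  shows "mcomp (delta (tgt f) i) f \<in> even_gap \<longleftrightarrow> f \<in> even_gap"
proof (cases f)
  case (fields c d g)
  have "valid_mor (mcomp (delta d i) (c, d, g))"
    using assms by (intro valid_mcomp valid_delta) (simp_all add: fields)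
  moreover have "0 < c"
    using assms(2,3) unfolding fields leading_gap_def by (cases "c = 0") simp_all
  then have "leading_gap (mcomp (delta d i) (c, d, g)) = leading_gap f"
    using assms by (simp add: fields mcomp_delta_triple leading_gap_def)
  ultimately show ?thesis
    using assms(1) by (simp add: fields even_gap_def)
qed

lemma conv_ua_d_even_gap:
  assumes "f \<in> even_gap" "q \<notin> even_gap"
  shows "conv (ua_d (tgt f)) (basis_el f) q = (if q = shift_up f then 1 else (0::'k::field))"
proof -
  have f: "valid_mor f" "even (leading_gap f)" using assms(1) by (simp_all add: even_gap_def)
  have composite: "mcomp (delta (tgt f) i) f = q \<longleftrightarrow> i \<le> leading_gap f \<and> q = shift_up f"
    if "i \<le> tgt f" for i
    using mcomp_delta_le_leading_gap[OF f(1)] mcomp_delta_gt_leading_gap[OF f(1) _ that] assms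
    by (cases "i \<le> leading_gap f") auto
  have "conv (ua_d (tgt f)) (basis_el f) q
      = (\<Sum>i\<le>tgt f. (-1) ^ i * conv (basis_el (delta (tgt f) i)) (basis_el f) q)"
    by (simp add: conv_ua_d_left)
  also have "\<dots> = (\<Sum>i\<le>tgt f. if i \<le> leading_gap f then (-1) ^ i * (if q = shift_up f then 1 else 0) else 0)"
    by (intro sum.cong) (auto simp: conv_basis_el composite)
  also have "\<dots> = (\<Sum>i\<le>leading_gap f. (-1) ^ i * (if q = shift_up f then 1 else 0))"
    using leading_gap_le_tgt[OF f(1)] by (intro sum.mono_neutral_cong_right) auto
  also have "\<dots> = (if q = shift_up f then 1 else 0)"
    using f(2) by (simp add: sum_distrib_right[symmetric] sum_minus_one_power_atMost)
  finally show ?thesis .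
qed

lemma valid_shift_up: "valid_mor f \<Longrightarrow> valid_mor (shift_up f)"
  by (cases f) (simp add: shift_up_def valid_mor_triple_iff)

lemma leading_gap_shift_up: "leading_gap (shift_up f) = Suc (leading_gap f)"
  by (simp add: shift_up_def leading_gap_def)

lemma shift_down_shift_up: "valid_mor f \<Longrightarrow> shift_down (shift_up f) = f"
  by (cases f) (auto simp: shift_up_def shift_down_def valid_mor_triple_iff fun_eq_iff)

lemma shift_down_pos_leading_gap:
  assumes "valid_mor f" "0 < leading_gap f"
  shows "valid_mor (shift_down f)" "shift_up (shift_down f) = f"
    "leading_gap (shift_down f) = leading_gap f - 1"
proof -
  obtain c d g where f: "f = (c, d, g)" by (cases f)
  have pos: "0 < g i" if "i < c" for i
    using assms le_leading_gap[of c d g i] that by (simp add: f)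
  have "0 < d"
    using assms pos[of 0] by (cases "c = 0") (auto simp: f leading_gap_def valid_mor_triple_iff)
  then show "valid_mor (shift_down f)" "shift_up (shift_down f) = f"
    "leading_gap (shift_down f) = leading_gap f - 1"
    using assms(1) pos
    by (auto simp: f shift_down_def shift_up_def leading_gap_def valid_mor_triple_iff fun_eq_iff)
      (metis Suc_leI diff_less_mono less_trans)+
qed

lemma inj_on_shift_up: "inj_on shift_up even_gap"
  by (rule inj_on_inverseI[where g = shift_down]) (simp add: even_gap_def shift_down_shift_up)

lemma shift_up_image: "shift_up ` even_gap = {m. valid_mor m} - even_gap"
proof
  show "shift_up ` even_gap \<subseteq> {m. valid_mor m} - even_gap"
    by (auto simp: even_gap_def valid_shift_up leading_gap_shift_up)
  show "{m. valid_mor m} - even_gap \<subseteq> shift_up ` even_gap"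
  proof
    fix q assume "q \<in> {m. valid_mor m} - even_gap"
    then have "valid_mor q" "odd (leading_gap q)" by (auto simp: even_gap_def)
    then have "0 < leading_gap q" by (intro odd_pos)
    then have "shift_down q \<in> even_gap" "q = shift_up (shift_down q)"
      using shift_down_pos_leading_gap[OF \<open>valid_mor q\<close>] \<open>odd (leading_gap q)\<close> by (auto simp: even_gap_def)
    then show "q \<in> shift_up ` even_gap" by blast
  qed
qed

lemma free_left_module_ua_image: "free_left_module (ua_image :: (mor \<Rightarrow> 'k::field) set) kDelta"
proof -
  interpret free_by_triangularity even_gap even_gap shift_up
    "conv :: (mor \<Rightarrow> 'k) \<Rightarrow> (mor \<Rightarrow> 'k) \<Rightarrow> mor \<Rightarrow> 'k" ua_d tgt ua_image src "\<lambda>y. delta y 0"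
  proof unfold_locales
    show "inj_on shift_up even_gap" by (rule inj_on_shift_up)
    show "shift_up ` even_gap = {m. valid_mor m} - even_gap" by (rule shift_up_image)
    show "conv (ua_d (tgt f)) (basis_el f) q = (if q = shift_up f then 1 else (0::'k))"
      if "f \<in> even_gap" "q \<notin> even_gap" for f q
      using that by (rule conv_ua_d_even_gap)
    show "finite {q. conv (ua_d (tgt f)) (basis_el f) q \<noteq> (0::'k)}" for f
      by (intro finite_support_conv) simp_all
    show "even_gap \<subseteq> {m. valid_mor m}" by (auto simp: even_gap_def)
    show "conv (\<lambda>m. a * basis_el (idm (tgt f)) m + b * ua_d (tgt f) m) (basis_el f)
        = (\<lambda>m. a * basis_el f m + b * conv (ua_d (tgt f)) (basis_el f) m :: 'k)"
      if "f \<in> even_gap" for f a b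
      using that by (simp add: conv_lincomb_left conv_idm_left even_gap_def)
    show "\<beta> = (\<lambda>m. \<beta> (idm y) * basis_el (idm y) m + \<beta> (delta y 0) * ua_d y m)"
      if "\<beta> \<in> ua_image" "\<And>m. \<beta> m \<noteq> 0 \<Longrightarrow> src m = y" for \<beta> :: "mor \<Rightarrow> 'k" and y
      using that by (rule ua_image_src_eq)
    show "(\<lambda>m. a * basis_el (idm y) m + b * ua_d y m) \<in> (ua_image :: (mor \<Rightarrow> 'k) set)" for a b y
      by (rule idm_ua_d_in_ua_image)
    show "src m = y" if "a * basis_el (idm y) m + b * ua_d y m \<noteq> (0::'k)" for a b y m
      using that by (rule src_of_idm_ua_d)
  qed simp_all
  show ?thesis
    unfolding free_left_module_def by (rule free_module)
qed

section \<open>The right module structure\<close>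

definition hits_zero :: "mor set" where
  "hits_zero = {f. valid_mor f \<and> 0 < src f \<and> fn f 0 = 0}"

definition drop_first :: "mor \<Rightarrow> mor" where
  "drop_first f = (src f - 1, tgt f, \<lambda>i. if i < src f - 1 then fn f (Suc i) else 0)"

definition prepend_zero :: "mor \<Rightarrow> mor" where
  "prepend_zero f = (Suc (src f), tgt f, \<lambda>i. case i of 0 \<Rightarrow> 0 | Suc j \<Rightarrow> fn f j)"

lemma valid_tgt_0: "valid_mor f \<Longrightarrow> tgt f = 0 \<Longrightarrow> f = idm 0"
  by (cases f) (auto simp: valid_mor_triple_iff idm_def fun_eq_iff, meson not_less)

lemma hits_zero_cases:
  assumes "f \<in> hits_zero"
  obtains n d g where "f = (Suc n, d, g)" "valid_mor (Suc n, d, g)" "g 0 = 0"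
  using assms by (cases f) (auto simp: hits_zero_def gr0_conv_Suc)

lemma mcomp_delta_right:
  "mcomp (Suc c, d, g) (delta c i) = (c, d, \<lambda>j. if j < c then g (if j < i then j else Suc j) else 0)"
  by (auto simp: mcomp_def delta_def fun_eq_iff)

lemma mcomp_delta_0_right: "src f = Suc n \<Longrightarrow> mcomp f (delta n 0) = drop_first f"
  by (cases f) (simp add: mcomp_delta_right drop_first_def fun_eq_iff)

lemma mcomp_delta_pos_right:
  assumes "f \<in> hits_zero" "src f = Suc n" "0 < i" "i \<le> n"
  shows "mcomp f (delta n i) \<in> hits_zero"
proof -
  have "valid_mor (mcomp f (delta n i))"
    using assms by (intro valid_mcomp valid_delta) (auto simp: hits_zero_def)
  with assms show ?thesis
    by (cases f) (auto simp: hits_zero_def mcomp_delta_right)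
qed

lemma conv_ua_d_into_hits_zero:
  assumes "f \<in> hits_zero" "q \<notin> insert (idm 0) hits_zero"
  shows "conv (basis_el f) (ua_d_into (src f)) q = (if q = drop_first f then 1 else (0::'k::field))"
proof -
  obtain n where n: "src f = Suc n" using assms(1) by (auto simp: hits_zero_def gr0_conv_Suc)
  have composite: "mcomp f (delta n i) = q \<longleftrightarrow> i = 0 \<and> q = drop_first f" if "i \<le> n" for i
    using mcomp_delta_0_right[OF n] mcomp_delta_pos_right[OF assms(1) n _ that] assms(2)
    by (cases "i = 0") auto
  have "conv (basis_el f) (ua_d_into (src f)) q
      = (\<Sum>i\<le>n. (-1) ^ i * conv (basis_el f) (basis_el (delta n i)) q)"
    by (simp add: n ua_d_into_def conv_ua_d_right)
  also have "\<dots> = (\<Sum>i\<le>n. if i = 0 then (if q = drop_first f then 1 else 0) else 0)"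
    by (intro sum.cong) (auto simp: conv_basis_el composite n)
  also have "\<dots> = (if q = drop_first f then 1 else 0)"
    by simp
  finally show ?thesis .
qed

lemma drop_first_hits_zero:
  assumes "f \<in> hits_zero"
  shows "valid_mor (drop_first f)" "drop_first f \<notin> insert (idm 0) hits_zero"
    "prepend_zero (drop_first f) = f"
proof -
  obtain n d g where f: "f = (Suc n, d, g)" "valid_mor (Suc n, d, g)" "g 0 = 0"
    using assms by (rule hits_zero_cases)
  have mono: "g r < g s" if "r < s" "s < Suc n" for r s
    using f(2) that by (simp add: valid_mor_triple_iff)
  have "g 0 < d" using f(2) by (simp add: valid_mor_triple_iff)
  moreover have "g 0 < g 1" if "0 < n"
    using mono[of 0 1] that by simp
  ultimately show "valid_mor (drop_first f)" "drop_first f \<notin> insert (idm 0) hits_zero"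
    "prepend_zero (drop_first f) = f"
    using f by (auto simp: drop_first_def prepend_zero_def hits_zero_def idm_def valid_mor_triple_iff
        fun_eq_iff split: nat.split)
qed

lemma prepend_zero_not_hitting_zero:
  assumes "valid_mor q" "q \<notin> insert (idm 0) hits_zero"
  shows "prepend_zero q \<in> hits_zero" "drop_first (prepend_zero q) = q"
proof -
  obtain c d g where q: "q = (c, d, g)" by (cases q)
  have "0 < d" using assms valid_tgt_0 by (cases "d = 0") (auto simp: q)
  moreover have "0 < g i" if "i < c" for i
    using assms valid_mor_mono[of c d g 0 i] that by (auto simp: q hits_zero_def)
  ultimately show "prepend_zero q \<in> hits_zero" "drop_first (prepend_zero q) = q"
    using assms(1)
    by (auto simp: q drop_first_def prepend_zero_def hits_zero_def valid_mor_triple_iff fun_eq_iff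
        split: nat.split)
qed

lemma inj_on_drop_first: "inj_on drop_first hits_zero"
  by (rule inj_on_inverseI[where g = prepend_zero]) (rule drop_first_hits_zero)

lemma drop_first_image: "drop_first ` hits_zero = {m. valid_mor m} - insert (idm 0) hits_zero"
proof (intro equalityI subsetI)
  fix q assume "q \<in> drop_first ` hits_zero"
  then obtain f where "f \<in> hits_zero" "q = drop_first f" by blast
  then show "q \<in> {m. valid_mor m} - insert (idm 0) hits_zero"
    using drop_first_hits_zero(1,2)[of f] by simp
next
  fix q assume "q \<in> {m. valid_mor m} - insert (idm 0) hits_zero"
  then have "valid_mor q" "q \<notin> insert (idm 0) hits_zero" by simp_all
  then show "q \<in> drop_first ` hits_zero"
    using prepend_zero_not_hitting_zero by (metis rev_image_eqI)
qed

lemma free_right_module_ua_image: "free_right_module (ua_image :: (mor \<Rightarrow> 'k::field) set) kDelta"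
proof -
  interpret free_by_triangularity "insert (idm 0) hits_zero" hits_zero drop_first
    "\<lambda>\<beta> g. conv g \<beta> :: mor \<Rightarrow> 'k" ua_d_into src ua_image tgt "\<lambda>y. delta (y - 1) 0"
  proof unfold_locales
    show "inj_on drop_first hits_zero" by (rule inj_on_drop_first)
    show "drop_first ` hits_zero = {m. valid_mor m} - insert (idm 0) hits_zero"
      by (rule drop_first_image)
    show "conv (basis_el f) (ua_d_into (src f)) q = (if q = drop_first f then 1 else (0::'k))"
      if "f \<in> hits_zero" "q \<notin> insert (idm 0) hits_zero" for f q
      using that by (rule conv_ua_d_into_hits_zero)
    show "finite {q. conv (basis_el f) (ua_d_into (src f)) q \<noteq> (0::'k)}" for f
      by (intro finite_support_conv) simp_all
    show "insert (idm 0) hits_zero \<subseteq> {m. valid_mor m}"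
      by (auto simp: hits_zero_def idm_def valid_mor_triple_iff)
    show X_zero: "(ua_d_into (src f) :: mor \<Rightarrow> 'k) = (\<lambda>_. 0)"
      if "f \<in> insert (idm 0) hits_zero - hits_zero" for f
      using that by (auto simp: ua_d_into_def)
    show "conv (basis_el f) (ua_d_into (src f)) = (\<lambda>_. 0::'k)"
      if "f \<in> insert (idm 0) hits_zero - hits_zero" for f
      by (simp add: X_zero[OF that])
    show "conv (basis_el f) (\<lambda>m. a * basis_el (idm (src f)) m + b * ua_d_into (src f) m)
        = (\<lambda>m. a * basis_el f m + b * conv (basis_el f) (ua_d_into (src f)) m :: 'k)"
      if "f \<in> insert (idm 0) hits_zero" for f a b
    proof -
      have "valid_mor f"
        using that by (auto simp: hits_zero_def idm_def valid_mor_triple_iff)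
      then show ?thesis by (simp add: conv_lincomb_right conv_idm_right)
    qed
    show "\<beta> = (\<lambda>m. \<beta> (idm y) * basis_el (idm y) m + \<beta> (delta (y - 1) 0) * ua_d_into y m)"
      if "\<beta> \<in> ua_image" "\<And>m. \<beta> m \<noteq> 0 \<Longrightarrow> tgt m = y" for \<beta> :: "mor \<Rightarrow> 'k" and y
      using that by (rule ua_image_tgt_eq)
    show "(\<lambda>m. a * basis_el (idm y) m + b * ua_d_into y m) \<in> (ua_image :: (mor \<Rightarrow> 'k) set)" for a b y
      by (rule idm_ua_d_into_in_ua_image)
    show "tgt m = y" if "a * basis_el (idm y) m + b * ua_d_into y m \<noteq> (0::'k)" for a b y m
      using that by (rule tgt_of_idm_ua_d_into)
  qed blast
  show ?thesis
    unfolding free_right_module_def by (rule free_module)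
qed

theorem lemma2p2:
  shows "free_left_module (ua_image :: (mor \<Rightarrow> 'k::field) set) kDelta
       \<and> free_right_module (ua_image :: (mor \<Rightarrow> 'k::field) set) kDelta"
  using free_left_module_ua_image free_right_module_ua_image by blast

end
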